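(* Let $\rho_{\Delta_{S-1}}=\max_{\boldsymbol{q},\boldsymbol{q}'\in\Delta_{S-1}}\|\boldsymbol{q}-\boldsymbol{q}'\|_2$ be the diameter of the simplex $\Delta_{S-1}$. Let $\boldsymbol{q}^*=\arg\min_{\boldsymbol{q}\in\Delta_{S-1}}\boldsymbol{q}^\top\Gamma\boldsymbol{q}-\boldsymbol{q}^\top\boldsymbol{d}$ and $\hat{\boldsymbol{q}}=\arg\min_{\boldsymbol{q}\in\Delta_{S-1}}\boldsymbol{q}^\top\widehat\Gamma\boldsymbol{q}-\boldsymbol{q}^\top\hat{\boldsymbol{d}}$. If $\lambda_{\min}(\Gamma)>0$, then \[ \|\hat{\boldsymbol{q}}-\boldsymbol{q}^*\|_2\le\frac{S\big(\|\widehat\Gamma-\Gamma\|_\infty+\tfrac12\|\hat{\boldsymbol{d}}-\boldsymbol{d}\|_\infty\big)}{\lambda_{\min}(\Gamma)}\wedge\rho_{\Delta_{S-1}}, \] where $\|\widehat\Gamma-\Gamma\|_\infty$ is the element-wise maximum absolute entry of the matrix and $\|\hat{\boldsymbol{d}}-\boldsymbol{d}\|_\infty$ the $\ell_\infty$ norm of the vector.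
   Context: $\Delta_{S-1}=\{\boldsymbol{q}\in\mathbb{R}^S:\sum_s q_s=1,\ \min_s q_s\ge0\}$. Functions $\tau^{(1)},\ldots,\tau^{(S)}$ are square integrable with respect to a probability distribution $Q_{\boldsymbol{X}}$, and $\Gamma$ is the $S\times S$ matrix $\Gamma_{k,l}=\mathbb{E}_{Q_{\boldsymbol{X}}}[\tau^{(k)}(\boldsymbol{X})\tau^{(l)}(\boldsymbol{X})]$ with diagonal vector $\boldsymbol{d}=(\Gamma_{1,1},\ldots,\Gamma_{S,S})^\top$. Given functions $\hat\tau^{(1)},\ldots,\hat\tau^{(S)}$ (estimators of the $\tau^{(s)}$) and points $\boldsymbol{X}^Q_1,\ldots,\boldsymbol{X}^Q_{n_Q}$, define $\widehat\Gamma_{k,l}=\frac{1}{n_Q}\sum_{i=1}^{n_Q}\hat\tau^{(k)}(\boldsymbol{X}^Q_i)\hat\tau^{(l)}(\boldsymbol{X}^Q_i)$ and $\hat d_s=\frac{1}{n_Q}\sum_{i=1}^{n_Q}(\hat\tau^{(s)}(\boldsymbol{X}^Q_i))^2$ (so $\hat{\boldsymbol{d}}$ is the diagonal of $\widehat\Gamma$). $\lambda_{\min}(\Gamma)$ is the smallest eigenvalue of $\Gamma$. *)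

theory Defs
  imports "HOL-Probability.Probability"
begin

text \<open>Probability prob_simplex Delta_{S-1}, with S = CARD('n).\<close>
definition prob_simplex :: "(real ^ 'n::finite) set" where
  "prob_simplex = {q. (\<Sum>s\<in>UNIV. q $ s) = 1 \<and> (\<forall>s. 0 \<le> q $ s)}"

definition simplex_diam :: "'n::finite itself \<Rightarrow> real" where
  "simplex_diam _ = Sup {norm (q - q') | q q'. q \<in> (prob_simplex :: (real ^ 'n) set) \<and> q' \<in> prob_simplex}"

definition eigenvalues :: "real ^ 'n::finite ^ 'n \<Rightarrow> real set" where
  "eigenvalues A = {c. \<exists>v. v \<noteq> 0 \<and> A *v v = c *\<^sub>R v}"

definition lambda_min :: "real ^ 'n::finite ^ 'n \<Rightarrow> real" where
  "lambda_min A = Min (eigenvalues A)"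

definition pop_Gram :: "'x measure \<Rightarrow> ('n \<Rightarrow> 'x \<Rightarrow> real) \<Rightarrow> real ^ 'n ^ 'n" where
  "pop_Gram Q tau = (\<chi> k l. integral\<^sup>L Q (\<lambda>x. tau k x * tau l x))"

definition emp_Gram :: "('n \<Rightarrow> 'x \<Rightarrow> real) \<Rightarrow> (nat \<Rightarrow> 'x) \<Rightarrow> nat \<Rightarrow> real ^ 'n ^ 'n" where
  "emp_Gram tauh X nQ = (\<chi> k l. (1 / real nQ) * (\<Sum>i=1..nQ. tauh k (X i) * tauh l (X i)))"

definition diag_vec :: "real ^ 'n ^ 'n \<Rightarrow> real ^ 'n" where
  "diag_vec A = (\<chi> s. A $ s $ s)"

definition qobj :: "real ^ 'n ^ 'n \<Rightarrow> real ^ 'n \<Rightarrow> real ^ 'n \<Rightarrow> real" where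
  "qobj G d q = q \<bullet> (G *v q) - q \<bullet> d"

definition mat_max_norm :: "real ^ 'n::finite ^ 'n \<Rightarrow> real" where
  "mat_max_norm A = Max {\<bar>A $ k $ l\<bar> | k l. True}"

definition vec_inf_norm :: "real ^ 'n::finite \<Rightarrow> real" where
  "vec_inf_norm v = Max {\<bar>v $ s\<bar> | s. True}"

end

theory Submission
  imports Defs
begin

text \<open>Both minimisers satisfy the variational inequality (q - q0) \<bullet> (2 M q0 - d) \<ge> 0 of a
  quadratic program over the convex simplex. Testing each one at the other minimiser and adding
  gives, for D = qhat - qstar, the bound D \<bullet> \<Gamma> D \<le> - D \<bullet> (\<Gamma>' - \<Gamma>) qhat + 1/2 D \<bullet> (d' - d).
  The left side is at least lambda_min \<Gamma> |D|^2 by the Rayleigh characterisation of the smallest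
  eigenvalue of the symmetric matrix \<Gamma>; since qhat has l1-norm 1, the right side is at most
  |D|_1 (|\<Gamma>' - \<Gamma>|_max + 1/2 |d' - d|_inf), and |D|_1 \<le> sqrt S |D| \<le> S |D|.\<close>

lemma nonneg_if_nonneg_linear_perturbation:
  fixes a b :: real
  assumes "\<And>t. 0 < t \<Longrightarrow> t \<le> 1 \<Longrightarrow> 0 \<le> a + t * b"
  shows "0 \<le> a"
proof (rule tendsto_lowerbound)
  show "((\<lambda>t. a + t * b) \<longlongrightarrow> a) (at_right 0)"
    by (auto intro!: tendsto_eq_intros)
  show "\<forall>\<^sub>F t in at_right 0. 0 \<le> a + t * b"
    using assms by (auto simp: eventually_at_right_field intro!: exI[of _ 1])
qed simp

lemma symmetric_matrix_inner_commute:
  fixes A :: "real^'n::finite^'n"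
  assumes "transpose A = A"
  shows "x \<bullet> (A *v y) = (A *v x) \<bullet> y"
proof -
  have "x \<bullet> (A *v y) = (x v* A) \<bullet> y" by (simp add: dot_lmul_matrix)
  also have "x v* A = A *v x" by (metis assms transpose_transpose vector_transpose_matrix)
  finally show ?thesis .
qed

lemma symmetric_quadratic_form_add:
  fixes A :: "real^'n::finite^'n"
  assumes "transpose A = A"
  shows "(x + t *\<^sub>R w) \<bullet> (A *v (x + t *\<^sub>R w))
           = x \<bullet> (A *v x) + 2 * t * (w \<bullet> (A *v x)) + t\<^sup>2 * (w \<bullet> (A *v w))"
proof -
  have "x \<bullet> (A *v w) = w \<bullet> (A *v x)"
    using symmetric_matrix_inner_commute[OF assms, of x w] by (simp add: inner_commute)
  then show ?thesis
    by (simp add: matrix_vector_right_distrib matrix_vector_mult_scaleR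
        inner_add_left inner_add_right power2_eq_square algebra_simps)
qed

lemma psd_quadratic_form_eq_0_imp_kernel:
  fixes B :: "real^'n::finite^'n"
  assumes sym: "transpose B = B" and psd: "\<And>u. 0 \<le> u \<bullet> (B *v u)"
    and zero: "v \<bullet> (B *v v) = 0"
  shows "B *v v = 0"
proof -
  define w where "w = B *v v"
  have "0 \<le> - 2 * (w \<bullet> w)"
  proof (rule nonneg_if_nonneg_linear_perturbation)
    fix t :: real assume "0 < t"
    have "0 \<le> (v + (- t) *\<^sub>R w) \<bullet> (B *v (v + (- t) *\<^sub>R w))" by (rule psd)
    also have "\<dots> = v \<bullet> (B *v v) + 2 * (- t) * (w \<bullet> (B *v v)) + (- t)\<^sup>2 * (w \<bullet> (B *v w))"
      by (rule symmetric_quadratic_form_add[OF sym])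
    also have "\<dots> = t * (- 2 * (w \<bullet> w) + t * (w \<bullet> (B *v w)))"
      by (simp add: zero[folded w_def] w_def[symmetric] power2_eq_square algebra_simps)
    finally show "0 \<le> - 2 * (w \<bullet> w) + t * (w \<bullet> (B *v w))"
      using \<open>0 < t\<close> by (simp add: zero_le_mult_iff)
  qed
  then have "w \<bullet> w \<le> 0" by simp
  then have "w = 0" by (meson antisym inner_ge_zero inner_eq_zero_iff)
  then show ?thesis by (simp add: w_def)
qed

lemma quadratic_form_min_on_sphere:
  fixes A :: "real^'n::finite^'n"
  obtains v where "norm v = 1" and "\<And>u. (v \<bullet> (A *v v)) * (norm u)\<^sup>2 \<le> u \<bullet> (A *v u)"
proof -
  let ?f = "\<lambda>v. v \<bullet> (A *v v)"
  have "axis undefined 1 \<in> sphere (0::real^'n) 1" by simp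
  moreover have "continuous_on (sphere 0 1) ?f" by (intro continuous_intros)
  ultimately obtain v where v: "v \<in> sphere 0 1" and min: "\<And>y. y \<in> sphere 0 1 \<Longrightarrow> ?f v \<le> ?f y"
    using continuous_attains_inf[OF compact_sphere, of 0 1 ?f] by blast
  have "?f v * (norm u)\<^sup>2 \<le> ?f u" for u
  proof (cases "u = 0")
    case False
    have "?f v \<le> ?f (inverse (norm u) *\<^sub>R u)" using False by (intro min) simp
    also have "\<dots> = ?f u / (norm u)\<^sup>2"
      by (simp add: matrix_vector_mult_scaleR power2_eq_square divide_inverse)
    finally show ?thesis using False by (simp add: pos_le_divide_eq)
  qed simp
  with v show ?thesis using that by simp
qed

text \<open>Rayleigh: a minimiser of the quadratic form on the unit sphere is an eigenvector, since
  it lies in the kernel of the positive semidefinite matrix A - m I.\<close>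
lemma symmetric_matrix_min_eigenvalue_exists:
  fixes A :: "real^'n::finite^'n"
  assumes sym: "transpose A = A"
  obtains m where "m \<in> eigenvalues A" and "\<And>u. m * (norm u)\<^sup>2 \<le> u \<bullet> (A *v u)"
proof -
  obtain v where v: "norm v = 1" and min: "\<And>u. (v \<bullet> (A *v v)) * (norm u)\<^sup>2 \<le> u \<bullet> (A *v u)"
    using quadratic_form_min_on_sphere by blast
  define m where "m = v \<bullet> (A *v v)"
  define B where "B = A - m *\<^sub>R mat 1"
  have Bu: "u \<bullet> (B *v u) = u \<bullet> (A *v u) - m * (norm u)\<^sup>2" for u
    by (simp add: B_def matrix_vector_mult_diff_rdistrib inner_diff_right
        power2_norm_eq_inner flip: scaleR_matrix_vector_assoc)
  have "transpose B = B"
    using sym by (simp add: B_def transpose_def vec_eq_iff mat_def)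
  moreover have "0 \<le> u \<bullet> (B *v u)" for u using min[of u] by (simp add: Bu m_def)
  moreover have "v \<bullet> (B *v v) = 0" using v by (simp add: Bu m_def)
  ultimately have "B *v v = 0" by (rule psd_quadratic_form_eq_0_imp_kernel)
  then have "A *v v = m *\<^sub>R v"
    by (simp add: B_def matrix_vector_mult_diff_rdistrib flip: scaleR_matrix_vector_assoc)
  then have "m \<in> eigenvalues A" using v unfolding eigenvalues_def by (auto intro!: exI[of _ v])
  with min show ?thesis using that by (simp add: m_def)
qed

lemma finite_eigenvalues_symmetric:
  fixes A :: "real^'n::finite^'n"
  assumes sym: "transpose A = A"
  shows "finite (eigenvalues A)"
proof -
  let ?E = "eigenvalues A"
  have "\<forall>c\<in>?E. \<exists>v. v \<noteq> 0 \<and> A *v v = c *\<^sub>R v" by (simp add: eigenvalues_def)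
  then obtain V where V: "\<And>c. c \<in> ?E \<Longrightarrow> V c \<noteq> 0 \<and> A *v V c = c *\<^sub>R V c"
    by (metis bchoice)
  have inj: "inj_on V ?E"
  proof (rule inj_onI)
    fix c c' assume c: "c \<in> ?E" and "c' \<in> ?E" and "V c = V c'"
    then have "c *\<^sub>R V c = c' *\<^sub>R V c" using V by metis
    then show "c = c'" using V[OF c] by (simp add: scaleR_cancel_right)
  qed
  have "pairwise orthogonal (V ` ?E)"
  proof (rule pairwiseI)
    fix x y assume "x \<in> V ` ?E" "y \<in> V ` ?E" "x \<noteq> y"
    then obtain c c' where c: "c \<in> ?E" and c': "c' \<in> ?E" and xy: "x = V c" "y = V c'" by blast
    with \<open>x \<noteq> y\<close> have "c \<noteq> c'" by blast
    have "c * (V c \<bullet> V c') = (A *v V c) \<bullet> V c'" using V[OF c] by simp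
    also have "\<dots> = V c \<bullet> (A *v V c')" by (simp add: symmetric_matrix_inner_commute[OF sym])
    also have "\<dots> = c' * (V c \<bullet> V c')" using V[OF c'] by simp
    finally show "orthogonal x y" using \<open>c \<noteq> c'\<close> xy by (simp add: orthogonal_def)
  qed
  moreover have "0 \<notin> V ` ?E" using V by auto
  ultimately have "independent (V ` ?E)" by (rule pairwise_orthogonal_independent)
  then have "finite (V ` ?E)" using independent_bound by blast
  then show ?thesis using inj finite_imageD by blast
qed

lemma lambda_min_le_quadratic_form:
  fixes A :: "real^'n::finite^'n"
  assumes sym: "transpose A = A"
  shows "lambda_min A * (norm u)\<^sup>2 \<le> u \<bullet> (A *v u)"
proof -
  obtain m where m: "m \<in> eigenvalues A" and min: "\<And>u. m * (norm u)\<^sup>2 \<le> u \<bullet> (A *v u)"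
    using symmetric_matrix_min_eigenvalue_exists[OF sym] by blast
  have "lambda_min A \<le> m"
    unfolding lambda_min_def using finite_eigenvalues_symmetric[OF sym] m by simp
  then have "lambda_min A * (norm u)\<^sup>2 \<le> m * (norm u)\<^sup>2" by (simp add: mult_right_mono)
  also have "\<dots> \<le> u \<bullet> (A *v u)" by (rule min)
  finally show ?thesis .
qed

lemma qobj_minimizer_variational_ineq:
  fixes M :: "real^'n::finite^'n"
  assumes sym: "transpose M = M" and "convex S" and "q0 \<in> S" and "q \<in> S"
    and min: "\<And>q. q \<in> S \<Longrightarrow> qobj M d q0 \<le> qobj M d q"
  shows "0 \<le> 2 * ((q - q0) \<bullet> (M *v q0)) - (q - q0) \<bullet> d"
proof (rule nonneg_if_nonneg_linear_perturbation)
  fix t :: real assume t: "0 < t" "t \<le> 1"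
  define w where "w = q - q0"
  have "q0 + t *\<^sub>R w = (1 - t) *\<^sub>R q0 + t *\<^sub>R q" by (simp add: w_def algebra_simps)
  also have "\<dots> \<in> S" using assms(2-4) t by (intro convexD_alt) auto
  finally have "qobj M d q0 \<le> qobj M d (q0 + t *\<^sub>R w)" by (rule min)
  also have "\<dots> = qobj M d q0 + t * ((2 * (w \<bullet> (M *v q0)) - w \<bullet> d) + t * (w \<bullet> (M *v w)))"
    unfolding qobj_def symmetric_quadratic_form_add[OF sym]
    by (simp add: power2_eq_square algebra_simps)
  finally show "0 \<le> 2 * ((q - q0) \<bullet> (M *v q0)) - (q - q0) \<bullet> d + t * ((q - q0) \<bullet> (M *v (q - q0)))"
    using t by (simp add: zero_le_mult_iff w_def)
qed

text \<open>Adding the variational inequalities of the two problems, each tested at the other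
  minimiser, makes the cross terms cancel up to the perturbation of the data.\<close>
lemma qobj_minimizers_gap:
  fixes G H :: "real^'n::finite^'n"
  assumes symG: "transpose G = G" and symH: "transpose H = H" and S: "convex S"
    and qstar: "qstar \<in> S" and minG: "\<And>q. q \<in> S \<Longrightarrow> qobj G d qstar \<le> qobj G d q"
    and qhat: "qhat \<in> S" and minH: "\<And>q. q \<in> S \<Longrightarrow> qobj H dh qhat \<le> qobj H dh q"
  shows "(qhat - qstar) \<bullet> (G *v (qhat - qstar))
           \<le> - ((qhat - qstar) \<bullet> ((H - G) *v qhat)) + (1/2) * ((qhat - qstar) \<bullet> (dh - d))"
proof -
  define D where "D = qhat - qstar"
  have "0 \<le> 2 * (D \<bullet> (G *v qstar)) - D \<bullet> d"
    unfolding D_def by (rule qobj_minimizer_variational_ineq[OF symG S qstar qhat minG])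
  moreover have "0 \<le> 2 * ((- D) \<bullet> (H *v qhat)) - (- D) \<bullet> dh"
    unfolding D_def minus_diff_eq by (rule qobj_minimizer_variational_ineq[OF symH S qhat qstar minH])
  moreover have "H *v qhat = G *v qstar + G *v D + (H - G) *v qhat"
    by (simp add: D_def matrix_vector_mult_diff_rdistrib flip: matrix_vector_right_distrib)
  then have "(- D) \<bullet> (H *v qhat)
      = - (D \<bullet> (G *v qstar)) - D \<bullet> (G *v D) - D \<bullet> ((H - G) *v qhat)"
    by (simp add: inner_add_right)
  moreover have "D \<bullet> (dh - d) = D \<bullet> dh - D \<bullet> d" by (rule inner_diff_right)
  ultimately show ?thesis unfolding D_def[symmetric] inner_minus_left by linarith
qed

lemma convex_prob_simplex: "convex prob_simplex"
proof (rule convexI)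
  fix x y :: "real^'n" and u v :: real
  assume "x \<in> prob_simplex" "y \<in> prob_simplex" "0 \<le> u" "0 \<le> v" "u + v = 1"
  then show "u *\<^sub>R x + v *\<^sub>R y \<in> prob_simplex"
    unfolding prob_simplex_def by (simp add: sum.distrib flip: sum_distrib_left)
qed

lemma prob_simplex_norm_le_1: "q \<in> prob_simplex \<Longrightarrow> norm q \<le> 1"
  using norm_le_l1_cart[of q] unfolding prob_simplex_def by simp

lemma norm_diff_le_simplex_diam:
  assumes "q \<in> (prob_simplex :: (real^'n::finite) set)" and "q' \<in> prob_simplex"
  shows "norm (q - q') \<le> simplex_diam TYPE('n)"
  unfolding simplex_diam_def
proof (rule cSup_upper)
  show "norm (q - q') \<in> {norm (q - q') |q q'. q \<in> (prob_simplex :: (real^'n) set) \<and> q' \<in> prob_simplex}"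
    using assms by blast
  show "bdd_above {norm (q - q') |q q'. q \<in> (prob_simplex :: (real^'n) set) \<and> q' \<in> prob_simplex}"
  proof (rule bdd_aboveI)
    fix x assume "x \<in> {norm (q - q') |q q'. q \<in> (prob_simplex :: (real^'n) set) \<and> q' \<in> prob_simplex}"
    then obtain a b :: "real^'n" where "x = norm (a - b)" "a \<in> prob_simplex" "b \<in> prob_simplex"
      by blast
    then show "x \<le> 2"
      using norm_triangle_ineq4[of a b] prob_simplex_norm_le_1[of a] prob_simplex_norm_le_1[of b]
      by linarith
  qed
qed

lemma abs_le_mat_max_norm: "\<bar>A $ k $ l\<bar> \<le> mat_max_norm (A :: real^'n::finite^'n)"
proof -
  have "{\<bar>A $ k $ l\<bar> | k l. True} = (\<lambda>(k, l). \<bar>A $ k $ l\<bar>) ` UNIV" by auto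
  then show ?thesis unfolding mat_max_norm_def by (intro Max_ge) auto
qed

lemma abs_le_vec_inf_norm: "\<bar>v $ s\<bar> \<le> vec_inf_norm (v :: real^'n::finite)"
proof -
  have "{\<bar>v $ s\<bar> | s. True} = (\<lambda>s. \<bar>v $ s\<bar>) ` UNIV" by auto
  then show ?thesis unfolding vec_inf_norm_def by (intro Max_ge) auto
qed

lemma mat_max_norm_nonneg: "0 \<le> mat_max_norm (A :: real^'n::finite^'n)"
  using abs_le_mat_max_norm[of A] abs_ge_zero order_trans by blast

lemma vec_inf_norm_nonneg: "0 \<le> vec_inf_norm (v :: real^'n::finite)"
  using abs_le_vec_inf_norm[of v] abs_ge_zero order_trans by blast

lemma abs_matrix_vector_mult_prob_simplex_le:
  fixes E :: "real^'n::finite^'n"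
  assumes "q \<in> prob_simplex"
  shows "\<bar>(E *v q) $ k\<bar> \<le> mat_max_norm E"
proof -
  have q: "\<And>l. 0 \<le> q $ l" "(\<Sum>l\<in>UNIV. q $ l) = 1"
    using assms unfolding prob_simplex_def by auto
  have "\<bar>(E *v q) $ k\<bar> \<le> (\<Sum>l\<in>UNIV. \<bar>E $ k $ l * q $ l\<bar>)"
    unfolding matrix_vector_mult_def by (simp add: sum_abs)
  also have "\<dots> = (\<Sum>l\<in>UNIV. \<bar>E $ k $ l\<bar> * q $ l)" using q(1) by (simp add: abs_mult)
  also have "\<dots> \<le> (\<Sum>l\<in>UNIV. mat_max_norm E * q $ l)"
    by (intro sum_mono mult_right_mono abs_le_mat_max_norm q(1))
  also have "\<dots> = mat_max_norm E" by (simp add: q(2) flip: sum_distrib_left)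
  finally show ?thesis .
qed

lemma abs_inner_le_sum_abs_mult:
  fixes v w :: "real^'n::finite"
  assumes "\<And>k. \<bar>v $ k\<bar> \<le> B"
  shows "\<bar>w \<bullet> v\<bar> \<le> (\<Sum>k\<in>UNIV. \<bar>w $ k\<bar>) * B"
proof -
  have "\<bar>w \<bullet> v\<bar> \<le> (\<Sum>k\<in>UNIV. \<bar>w $ k * v $ k\<bar>)"
    unfolding inner_vec_def by (simp add: sum_abs)
  also have "\<dots> = (\<Sum>k\<in>UNIV. \<bar>w $ k\<bar> * \<bar>v $ k\<bar>)" by (simp add: abs_mult)
  also have "\<dots> \<le> (\<Sum>k\<in>UNIV. \<bar>w $ k\<bar> * B)" by (intro sum_mono mult_left_mono assms) simp
  finally show ?thesis by (simp add: sum_distrib_right)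
qed

lemma sum_abs_le_sqrt_card_mult_norm:
  fixes w :: "real^'n::finite"
  shows "(\<Sum>k\<in>UNIV. \<bar>w $ k\<bar>) \<le> sqrt (real CARD('n)) * norm w"
proof -
  have "(\<Sum>k\<in>UNIV. \<bar>w $ k\<bar> * \<bar>1\<bar>) \<le> L2_set (\<lambda>k. w $ k) UNIV * L2_set (\<lambda>_. 1) (UNIV :: 'n set)"
    by (rule L2_set_mult_ineq)
  moreover have "L2_set (\<lambda>k. w $ k) UNIV = norm w" by (simp add: norm_vec_def L2_set_def)
  ultimately show ?thesis by (simp add: L2_set_constant mult.commute)
qed

lemma qobj_minimizers_dist_le:
  fixes G H :: "real^'n::finite^'n"
  assumes symG: "transpose G = G" and symH: "transpose H = H"
    and qstar: "qstar \<in> prob_simplex"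
    and minG: "\<And>q. q \<in> prob_simplex \<Longrightarrow> qobj G d qstar \<le> qobj G d q"
    and qhat: "qhat \<in> prob_simplex"
    and minH: "\<And>q. q \<in> prob_simplex \<Longrightarrow> qobj H dh qhat \<le> qobj H dh q"
    and lam: "lambda_min G > 0"
  shows "norm (qhat - qstar)
    \<le> real CARD('n) * (mat_max_norm (H - G) + (1/2) * vec_inf_norm (dh - d)) / lambda_min G"
proof -
  define D where "D = qhat - qstar"
  define L where "L = (\<Sum>k\<in>UNIV. \<bar>D $ k\<bar>)"
  define K where "K = mat_max_norm (H - G) + (1/2) * vec_inf_norm (dh - d)"
  have "0 \<le> K"
    unfolding K_def by (simp add: mat_max_norm_nonneg vec_inf_norm_nonneg)
  have E: "\<bar>D \<bullet> ((H - G) *v qhat)\<bar> \<le> L * mat_max_norm (H - G)"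
    unfolding L_def by (intro abs_inner_le_sum_abs_mult abs_matrix_vector_mult_prob_simplex_le qhat)
  have e: "\<bar>D \<bullet> (dh - d)\<bar> \<le> L * vec_inf_norm (dh - d)"
    unfolding L_def by (intro abs_inner_le_sum_abs_mult abs_le_vec_inf_norm)
  have "lambda_min G * (norm D)\<^sup>2 \<le> D \<bullet> (G *v D)"
    by (rule lambda_min_le_quadratic_form[OF symG])
  also have "\<dots> \<le> - (D \<bullet> ((H - G) *v qhat)) + (1/2) * (D \<bullet> (dh - d))"
    unfolding D_def using qobj_minimizers_gap[OF symG symH convex_prob_simplex qstar minG qhat minH] .
  also have "\<dots> \<le> L * K" using E e by (simp add: K_def algebra_simps abs_le_iff)
  also have "\<dots> \<le> sqrt (real CARD('n)) * norm D * K"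
    unfolding L_def using \<open>0 \<le> K\<close> by (intro mult_right_mono sum_abs_le_sqrt_card_mult_norm)
  also have "\<dots> \<le> real CARD('n) * norm D * K"
    using real_sqrt_le_iff[of "real CARD('n)" "(real CARD('n))\<^sup>2"] \<open>0 \<le> K\<close>
    by (intro mult_right_mono) (simp_all add: power2_eq_square)
  finally have "lambda_min G * (norm D)\<^sup>2 \<le> real CARD('n) * K * norm D" by (simp add: ac_simps)
  then have "lambda_min G * norm D \<le> real CARD('n) * K"
    by (cases "D = 0") (simp_all add: power2_eq_square \<open>0 \<le> K\<close>)
  then show ?thesis using lam by (simp add: D_def K_def pos_le_divide_eq mult.commute)
qed

lemma transpose_pop_Gram: "transpose (pop_Gram Q tau) = pop_Gram Q tau"
  by (simp add: transpose_def pop_Gram_def vec_eq_iff mult.commute)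

lemma transpose_emp_Gram: "transpose (emp_Gram tauh X nQ) = emp_Gram tauh X nQ"
  by (simp add: transpose_def emp_Gram_def vec_eq_iff mult.commute)

theorem lemma1:
  fixes Q :: "'x measure"
    and tau tauh :: "'n::finite \<Rightarrow> 'x \<Rightarrow> real"
    and X :: "nat \<Rightarrow> 'x"
    and nQ :: nat
    and qstar qhat :: "real ^ 'n"
  assumes "prob_space Q"
    and "\<And>s. tau s \<in> borel_measurable Q"
    and "\<And>s. integrable Q (\<lambda>x. (tau s x)\<^sup>2)"
    and "qstar \<in> prob_simplex"
    and "\<And>q. q \<in> prob_simplex \<Longrightarrow>
           qobj (pop_Gram Q tau) (diag_vec (pop_Gram Q tau)) qstar
             \<le> qobj (pop_Gram Q tau) (diag_vec (pop_Gram Q tau)) q"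
    and "qhat \<in> prob_simplex"
    and "\<And>q. q \<in> prob_simplex \<Longrightarrow>
           qobj (emp_Gram tauh X nQ) (diag_vec (emp_Gram tauh X nQ)) qhat
             \<le> qobj (emp_Gram tauh X nQ) (diag_vec (emp_Gram tauh X nQ)) q"
    and "lambda_min (pop_Gram Q tau) > 0"
  shows "norm (qhat - qstar)
    \<le> min (real CARD('n) * (mat_max_norm (emp_Gram tauh X nQ - pop_Gram Q tau)
              + (1/2) * vec_inf_norm (diag_vec (emp_Gram tauh X nQ) - diag_vec (pop_Gram Q tau)))
            / lambda_min (pop_Gram Q tau))
           (simplex_diam TYPE('n))"
  using qobj_minimizers_dist_le[OF transpose_pop_Gram transpose_emp_Gram assms(4-8)]
    norm_diff_le_simplex_diam[OF assms(6,4)]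
  by simp

end
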